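(* There does not exist a quasi-3 design with parameters $2$-$(267,57,12)$ and triple intersection numbers $x=0$, $y=3$.
   Context: A $2$-$(v,k,\lambda)$ design is a pair $(X,\mathcal{B})$ where $X$ is a set of $v$ points and $\mathcal{B}$ is a collection of $k$-subsets of $X$ (blocks) such that every $2$-subset of $X$ is contained in exactly $\lambda$ blocks. It is symmetric if the number of blocks equals $v$. A symmetric $2$-$(v,k,\lambda)$ design is a quasi-3 design with triple intersection numbers $x<y$ if any three distinct blocks have exactly $x$ or exactly $y$ points in common. *)

theory Defs
  imports Main
begin

text \<open>A 2-(v,k,lambda) design: point set X with v points, and a family of blocks
  indexed by a finite set I (a collection, so repeated blocks are allowed),
  each block a k-subset of X, every 2-subset of X contained in exactly lambda blocks
  (counted with multiplicity, i.e. counted by index).\<close>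
definition design2 :: "'a set \<Rightarrow> 'i set \<Rightarrow> ('i \<Rightarrow> 'a set) \<Rightarrow> nat \<Rightarrow> nat \<Rightarrow> nat \<Rightarrow> bool" where
  "design2 X I B v k lam \<longleftrightarrow>
     finite X \<and> card X = v \<and> finite I \<and>
     (\<forall>i\<in>I. B i \<subseteq> X \<and> card (B i) = k) \<and>
     (\<forall>p\<in>X. \<forall>q\<in>X. p \<noteq> q \<longrightarrow> card {i\<in>I. {p, q} \<subseteq> B i} = lam)"

definition symmetric_design2 :: "'a set \<Rightarrow> 'i set \<Rightarrow> ('i \<Rightarrow> 'a set) \<Rightarrow> nat \<Rightarrow> nat \<Rightarrow> nat \<Rightarrow> bool" where
  "symmetric_design2 X I B v k lam \<longleftrightarrow> design2 X I B v k lam \<and> card I = v"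

definition quasi3_design :: "'a set \<Rightarrow> 'i set \<Rightarrow> ('i \<Rightarrow> 'a set) \<Rightarrow> nat \<Rightarrow> nat \<Rightarrow> nat \<Rightarrow> nat \<Rightarrow> nat \<Rightarrow> bool" where
  "quasi3_design X I B v k lam x y \<longleftrightarrow>
     symmetric_design2 X I B v k lam \<and> x < y \<and>
     (\<forall>i\<in>I. \<forall>j\<in>I. \<forall>l\<in>I. i \<noteq> j \<and> i \<noteq> l \<and> j \<noteq> l \<longrightarrow>
        card (B i \<inter> B j \<inter> B l) = x \<or> card (B i \<inter> B j \<inter> B l) = y)"

end

theory Submission
  imports Defs Complex_Main
begin

text \<open>If A is the incidence matrix
  of a symmetric 2-(v,k,lambda) design and n = k - lambda, then for every rational vector y
  the quadratic form |A^T y|^2 equals n |y|^2 + lambda (sum y)^2. For odd v one adjoins one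
  more variable; since n = 45 = 6^2 + 3^2, the form n |y|^2 becomes a plain sum of squares |w|^2
  after a linear change of variables pairing the coordinates. Choosing the w one at a time so
  that the j-th coordinate of A^T y equals +-w_j, and the last w equal to 1, everything cancels
  except a rational solution of 45 x^2 = 1 + 12 y^2. That equation has none, since -12 is not
  a square modulo 5.\<close>

definition linear_form :: "(('v \<Rightarrow> 'a::field) \<Rightarrow> 'a) \<Rightarrow> bool" where
  "linear_form f \<longleftrightarrow>
     (\<forall>u w. f (\<lambda>i. u i + w i) = f u + f w) \<and> (\<forall>c u. f (\<lambda>i. c * u i) = c * f u)"

lemma linear_form_scale: "linear_form f \<Longrightarrow> linear_form (\<lambda>w. c * f w)"
  by (simp add: linear_form_def algebra_simps)

lemma linear_form_sum:
  assumes "\<And>p. p \<in> S \<Longrightarrow> linear_form (f p)"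
  shows "linear_form (\<lambda>w. \<Sum>p\<in>S. f p w)"
  using assms by (simp add: linear_form_def sum.distrib sum_distrib_left)

lemma linear_form_fun_upd:
  assumes f: "linear_form f" and \<phi>: "linear_form \<phi>"
  shows "linear_form (\<lambda>w. f (w(j := \<phi> w)))"
  unfolding linear_form_def
proof (intro conjI allI)
  fix u w
  have "(\<lambda>i. u i + w i)(j := \<phi> (\<lambda>i. u i + w i)) = (\<lambda>i. (u(j := \<phi> u)) i + (w(j := \<phi> w)) i)"
    using \<phi> by (auto simp: linear_form_def)
  then show "f ((\<lambda>i. u i + w i)(j := \<phi> (\<lambda>i. u i + w i))) = f (u(j := \<phi> u)) + f (w(j := \<phi> w))"
    using f by (simp add: linear_form_def fun_upd_def)
next
  fix c u
  have "(\<lambda>i. c * u i)(j := \<phi> (\<lambda>i. c * u i)) = (\<lambda>i. c * (u(j := \<phi> u)) i)"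
    using \<phi> by (auto simp: linear_form_def)
  then show "f ((\<lambda>i. c * u i)(j := \<phi> (\<lambda>i. c * u i))) = c * f (u(j := \<phi> u))"
    using f by (simp add: linear_form_def fun_upd_def)
qed

lemma linear_form_fun_upd_eq:
  assumes "linear_form f"
  shows "f (w(j := x)) = f (w(j := 0)) + x * f (\<lambda>i. if i = j then 1 else 0)"
proof -
  have "w(j := x) = (\<lambda>i. (w(j := 0)) i + x * (if i = j then 1 else 0))"
    by auto
  then show ?thesis
    using assms by (simp add: linear_form_def fun_upd_def)
qed

text \<open>The step of Ryser's elimination: writing f w = F + c w_j, the substitution
  w_j := phi w with phi = eps F / (1 - eps c) gives f = eps phi, where the sign eps = +-1 is
  chosen to make the denominator nonzero.\<close>

lemma linear_form_substitute_square:
  fixes f :: "('v \<Rightarrow> 'a::field_char_0) \<Rightarrow> 'a"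
  assumes f: "linear_form f"
  shows "\<exists>\<phi>. linear_form \<phi> \<and> (\<forall>w. (f (w(j := \<phi> w)))\<^sup>2 = (\<phi> w)\<^sup>2)"
proof -
  define c where "c = f (\<lambda>i. if i = j then 1 else 0)"
  define \<epsilon> :: 'a where "\<epsilon> = (if c = 1 then -1 else 1)"
  define d where "d = 1 - \<epsilon> * c"
  have \<epsilon>: "\<epsilon> * \<epsilon> = 1" and d: "d \<noteq> 0"
    by (auto simp: \<epsilon>_def d_def)
  define \<phi> where "\<phi> = (\<lambda>w. \<epsilon> / d * f (w(j := 0)))"
  have "linear_form (\<lambda>w. f (w(j := 0)))"
    using linear_form_fun_upd[OF f, of "\<lambda>_. 0"] by (simp add: linear_form_def)
  then have "linear_form \<phi>"
    unfolding \<phi>_def by (rule linear_form_scale)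
  moreover have "(f (w(j := \<phi> w)))\<^sup>2 = (\<phi> w)\<^sup>2" for w
  proof -
    have "\<epsilon> * d * \<phi> w = (\<epsilon> * \<epsilon>) * f (w(j := 0))"
      using d by (simp add: \<phi>_def)
    then have F: "f (w(j := 0)) = \<epsilon> * d * \<phi> w"
      using \<epsilon> by simp
    have "f (w(j := \<phi> w)) = f (w(j := 0)) + \<phi> w * c"
      unfolding c_def by (rule linear_form_fun_upd_eq[OF f])
    also have "\<dots> = \<epsilon> * \<phi> w + (1 - \<epsilon> * \<epsilon>) * c * \<phi> w"
      unfolding F d_def by (simp add: algebra_simps)
    finally have "f (w(j := \<phi> w)) = \<epsilon> * \<phi> w"
      using \<epsilon> by simp
    then show ?thesis
      using \<epsilon> by (simp add: power_mult_distrib power2_eq_square)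
  qed
  ultimately show ?thesis
    by blast
qed

lemma linear_forms_square_solution:
  fixes f :: "'v \<Rightarrow> ('v \<Rightarrow> 'a::field_char_0) \<Rightarrow> 'a"
  assumes "finite K" "z \<notin> K" "\<And>j. j \<in> K \<Longrightarrow> linear_form (f j)"
  shows "\<exists>w. w z = 1 \<and> (\<forall>j\<in>K. (f j w)\<^sup>2 = (w j)\<^sup>2)"
  using assms
proof (induction K arbitrary: f rule: finite_induct)
  case empty
  show ?case by (intro exI[of _ "\<lambda>_. 1"]) simp
next
  case (insert j0 K)
  have "linear_form (f j0)"
    using insert.prems(2) by blast
  then obtain \<phi> where \<phi>: "linear_form \<phi>" "\<And>w. (f j0 (w(j0 := \<phi> w)))\<^sup>2 = (\<phi> w)\<^sup>2"
    by (metis linear_form_substitute_square)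
  have lin: "linear_form (\<lambda>w. f j (w(j0 := \<phi> w)))" if "j \<in> K" for j
  proof (rule linear_form_fun_upd)
    show "linear_form (f j)"
      using insert.prems(2) that by blast
  qed (rule \<phi>(1))
  have "\<exists>w. w z = 1 \<and> (\<forall>j\<in>K. (f j (w(j0 := \<phi> w)))\<^sup>2 = (w j)\<^sup>2)"
    by (rule insert.IH[where f = "\<lambda>j w. f j (w(j0 := \<phi> w))"]) (use insert.prems(1) lin in auto)
  then obtain w where w: "w z = 1" "\<forall>j\<in>K. (f j (w(j0 := \<phi> w)))\<^sup>2 = (w j)\<^sup>2"
    by blast
  show ?case
  proof (intro exI conjI ballI)
    show "(w(j0 := \<phi> w)) z = 1"
      using insert.prems(1) w(1) by simp
    fix j assume "j \<in> insert j0 K"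
    then consider "j = j0" | "j \<in> K" "j \<noteq> j0"
      using insert.hyps(2) by blast
    then show "(f j (w(j0 := \<phi> w)))\<^sup>2 = ((w(j0 := \<phi> w)) j)\<^sup>2"
    proof cases
      case 1
      then show ?thesis
        using \<phi>(2)[of w] by (simp only: fun_upd_same)
    next
      case 2
      then show ?thesis
        using w(2) by simp
    qed
  qed
qed

lemma sum_squares_linear_combinations:
  fixes a :: "'p \<Rightarrow> 'j \<Rightarrow> 'a::comm_ring_1"
  assumes "finite P" "finite J"
    and gram: "\<And>p q. p \<in> P \<Longrightarrow> q \<in> P \<Longrightarrow> (\<Sum>j\<in>J. a p j * a q j) = (if p = q then k else lam)"
  shows "(\<Sum>j\<in>J. (\<Sum>p\<in>P. a p j * y p)\<^sup>2)
           = (k - lam) * (\<Sum>p\<in>P. (y p)\<^sup>2) + lam * (\<Sum>p\<in>P. y p)\<^sup>2"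
proof -
  have "(\<Sum>j\<in>J. (\<Sum>p\<in>P. a p j * y p)\<^sup>2) = (\<Sum>j\<in>J. \<Sum>p\<in>P. \<Sum>q\<in>P. (a p j * y p) * (a q j * y q))"
    by (simp add: power2_eq_square sum_product)
  also have "\<dots> = (\<Sum>p\<in>P. \<Sum>q\<in>P. \<Sum>j\<in>J. (a p j * y p) * (a q j * y q))"
    by (subst sum.swap) (simp add: sum.swap[of _ J])
  also have "\<dots> = (\<Sum>p\<in>P. \<Sum>q\<in>P. y p * y q * (if p = q then k else lam))"
    by (intro sum.cong refl) (simp add: gram[symmetric] sum_distrib_left mult_ac)
  also have "\<dots> = (\<Sum>p\<in>P. (k - lam) * (y p)\<^sup>2 + (\<Sum>q\<in>P. lam * (y p * y q)))"
  proof (intro sum.cong refl)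
    fix p assume p: "p \<in> P"
    have "(\<Sum>q\<in>P. y p * y q * (if p = q then k else lam))
            = (\<Sum>q\<in>P. (if p = q then (k - lam) * (y p)\<^sup>2 else 0) + lam * (y p * y q))"
      by (intro sum.cong refl) (auto simp: power2_eq_square algebra_simps)
    then show "(\<Sum>q\<in>P. y p * y q * (if p = q then k else lam))
                 = (k - lam) * (y p)\<^sup>2 + (\<Sum>q\<in>P. lam * (y p * y q))"
      using p \<open>finite P\<close> by (simp add: sum.distrib)
  qed
  also have "\<dots> = (k - lam) * (\<Sum>p\<in>P. (y p)\<^sup>2) + lam * (\<Sum>p\<in>P. \<Sum>q\<in>P. y p * y q)"
    by (simp add: sum.distrib sum_distrib_left)
  also have "(\<Sum>p\<in>P. \<Sum>q\<in>P. y p * y q) = (\<Sum>p\<in>P. y p)\<^sup>2"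
    by (simp add: power2_eq_square sum_product)
  finally show ?thesis .
qed

text \<open>Inverse of the map (w_2i, w_2i+1) |-> (s w_2i + t w_2i+1, t w_2i - s w_2i+1), which
  multiplies the form w_2i^2 + w_2i+1^2 by s^2 + t^2.\<close>

definition pair_rotation :: "'a::field \<Rightarrow> 'a \<Rightarrow> (nat \<Rightarrow> 'a) \<Rightarrow> nat \<Rightarrow> 'a" where
  "pair_rotation s t w p =
     (if even p then s * w p + t * w (Suc p) else t * w (p - 1) - s * w p) / (s\<^sup>2 + t\<^sup>2)"

lemma linear_form_pair_rotation: "linear_form (\<lambda>w. pair_rotation s t w p)"
  by (simp add: linear_form_def pair_rotation_def add_divide_distrib diff_divide_distrib
      algebra_simps)

lemma sum_squares_pair_rotation:
  fixes s t :: "'a::field"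
  assumes "s\<^sup>2 + t\<^sup>2 \<noteq> 0"
  shows "(s\<^sup>2 + t\<^sup>2) * (\<Sum>p\<le>Suc (2 * m). (pair_rotation s t w p)\<^sup>2) = (\<Sum>p\<le>Suc (2 * m). (w p)\<^sup>2)"
proof -
  have "(s\<^sup>2 + t\<^sup>2) * ((pair_rotation s t w (2 * i))\<^sup>2 + (pair_rotation s t w (Suc (2 * i)))\<^sup>2)
          = (w (2 * i))\<^sup>2 + (w (Suc (2 * i)))\<^sup>2" for i
  proof -
    let ?a = "w (2 * i)" and ?b = "w (Suc (2 * i))"
    have "(s * ?a + t * ?b)\<^sup>2 + (t * ?a - s * ?b)\<^sup>2 = (s\<^sup>2 + t\<^sup>2) * (?a\<^sup>2 + ?b\<^sup>2)"
      by algebra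
    then show ?thesis
      using assms by (simp add: pair_rotation_def power_divide add_divide_distrib[symmetric]
          power2_eq_square[of "s\<^sup>2 + t\<^sup>2"])
  qed
  then show ?thesis
    unfolding sum.in_pairs_0 sum_distrib_left by simp
qed

text \<open>Ryser's form of the Bruck--Ryser--Chowla condition for odd \<open>v\<close> and \<open>k - \<lambda>\<close> a sum of two
  squares; \<open>a\<close> is the (row = point, column = block) incidence matrix.\<close>

lemma odd_square_design_condition:
  fixes a :: "nat \<Rightarrow> nat \<Rightarrow> 'a::field_char_0"
  assumes gram: "\<And>p q. p < v \<Longrightarrow> q < v \<Longrightarrow> (\<Sum>j<v. a p j * a q j) = (if p = q then k else lam)"
    and "odd v" and two_squares: "k - lam = s\<^sup>2 + t\<^sup>2" "s\<^sup>2 + t\<^sup>2 \<noteq> 0"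
  shows "\<exists>x y. (k - lam) * x\<^sup>2 = 1 + lam * y\<^sup>2"
proof -
  let ?y = "pair_rotation s t"
  define L where "L = (\<lambda>j w. \<Sum>p<v. a p j * ?y w p)"
  have "linear_form (L j)" for j
    unfolding L_def
    by (intro linear_form_sum linear_form_scale linear_form_pair_rotation)
  then obtain w where w: "w v = 1" "\<forall>j<v. (L j w)\<^sup>2 = (w j)\<^sup>2"
    using linear_forms_square_solution[of "{..<v}" v L] by auto
  obtain m where v: "v = Suc (2 * m)"
    using \<open>odd v\<close> by (auto elim!: oddE)
  have rotation: "(k - lam) * (\<Sum>p\<le>v. (?y w p)\<^sup>2) = (\<Sum>p\<le>v. (w p)\<^sup>2)"
    using sum_squares_pair_rotation[OF two_squares(2), where m = m and w = w]
    unfolding two_squares(1) v .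
  have "(\<Sum>j<v. (w j)\<^sup>2) = (\<Sum>j<v. (L j w)\<^sup>2)"
    using w(2) by simp
  also have "\<dots> = (k - lam) * (\<Sum>p<v. (?y w p)\<^sup>2) + lam * (\<Sum>p<v. ?y w p)\<^sup>2"
    unfolding L_def by (rule sum_squares_linear_combinations) (simp_all add: gram)
  also have "(k - lam) * (\<Sum>p<v. (?y w p)\<^sup>2) = (\<Sum>p\<le>v. (w p)\<^sup>2) - (k - lam) * (?y w v)\<^sup>2"
    using rotation by (simp add: algebra_simps flip: lessThan_Suc_atMost)
  finally have "(k - lam) * (?y w v)\<^sup>2 = 1 + lam * (\<Sum>p<v. ?y w p)\<^sup>2"
    using w(1) by (simp add: algebra_simps flip: lessThan_Suc_atMost)
  then show ?thesis by blast
qed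

lemma five_dvd_square_form:
  fixes D B :: int
  assumes "5 dvd D\<^sup>2 + 12 * B\<^sup>2"
  shows "5 dvd D \<and> 5 dvd B"
proof -
  have "D\<^sup>2 mod 5 = (D mod 5)\<^sup>2 mod 5" "(12 * B\<^sup>2) mod 5 = (12 * (B mod 5)\<^sup>2) mod 5"
    by (simp add: power_mod) (metis mod_mult_right_eq power_mod)
  then have "((D mod 5)\<^sup>2 + 12 * (B mod 5)\<^sup>2) mod 5 = 0"
    using assms by (metis dvd_eq_mod_eq_0 mod_add_eq)
  moreover have "D mod 5 \<in> {0, 1, 2, 3, 4}" "B mod 5 \<in> {0, 1, 2, 3, 4}"
    by auto
  ultimately have "D mod 5 = 0 \<and> B mod 5 = 0"
    by auto
  then show ?thesis
    by (simp add: dvd_eq_mod_eq_0)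
qed

lemma five_dvd_nine_square:
  fixes A :: int
  assumes "5 dvd 9 * A\<^sup>2"
  shows "5 dvd A"
proof -
  have "(9 * (A mod 5)\<^sup>2) mod 5 = 0"
    using assms by (metis dvd_eq_mod_eq_0 mod_mult_right_eq power_mod)
  moreover have "A mod 5 \<in> {0, 1, 2, 3, 4}"
    by auto
  ultimately have "A mod 5 = 0"
    by auto
  then show ?thesis
    by (simp add: dvd_eq_mod_eq_0)
qed

text \<open>Infinite descent: 5 divides D and B, hence A, and the quotients form a smaller solution.\<close>

lemma int_square_form_45_12_trivial:
  fixes A B D :: int
  assumes "45 * A\<^sup>2 = D\<^sup>2 + 12 * B\<^sup>2"
  shows "D = 0"
  using assms
proof (induction "nat \<bar>D\<bar>" arbitrary: A B D rule: less_induct)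
  case less
  show ?case
  proof (rule ccontr)
    assume "D \<noteq> 0"
    have "5 dvd D\<^sup>2 + 12 * B\<^sup>2"
      unfolding less.prems[symmetric] by simp
    then have "5 dvd D \<and> 5 dvd B"
      by (rule five_dvd_square_form)
    then obtain D' B' where D: "D = 5 * D'" and B: "B = 5 * B'"
      by (auto elim!: dvdE)
    have reduced: "9 * A\<^sup>2 = 5 * (D'\<^sup>2 + 12 * B'\<^sup>2)"
      using less.prems unfolding D B by (simp add: power_mult_distrib)
    then have "5 dvd 9 * A\<^sup>2"
      by simp
    then have "5 dvd A"
      by (rule five_dvd_nine_square)
    then obtain A' where A: "A = 5 * A'"
      by (auto elim!: dvdE)
    have "45 * A'\<^sup>2 = D'\<^sup>2 + 12 * B'\<^sup>2"
      using reduced unfolding A by (simp add: power_mult_distrib)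
    moreover have "nat \<bar>D'\<bar> < nat \<bar>D\<bar>"
      using \<open>D \<noteq> 0\<close> unfolding D by simp
    ultimately have "D' = 0"
      using less.hyps by blast
    with \<open>D \<noteq> 0\<close> D show False
      by simp
  qed
qed

lemma rat_square_form_45_12_unsolvable: "45 * x\<^sup>2 \<noteq> 1 + 12 * (y::rat)\<^sup>2"
proof
  assume eq: "45 * x\<^sup>2 = 1 + 12 * y\<^sup>2"
  obtain A m where x: "x = of_int A / of_int m" and "m > 0"
    by (metis prod.exhaust quotient_of_denom_pos quotient_of_div)
  obtain B n where y: "y = of_int B / of_int n" and "n > 0"
    by (metis prod.exhaust quotient_of_denom_pos quotient_of_div)
  have "45 * (of_int A / of_int m)\<^sup>2 * (of_int m * of_int n)\<^sup>2
      = (1 + 12 * (of_int B / of_int n :: rat)\<^sup>2) * (of_int m * of_int n)\<^sup>2"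
    using eq unfolding x y by simp
  then have "of_int (45 * (A * n)\<^sup>2) = (of_int ((m * n)\<^sup>2 + 12 * (B * m)\<^sup>2) :: rat)"
    using \<open>m > 0\<close> \<open>n > 0\<close> by (simp add: power_mult_distrib power_divide algebra_simps)
  then have "45 * (A * n)\<^sup>2 = (m * n)\<^sup>2 + 12 * (B * m)\<^sup>2"
    by (simp only: of_int_eq_iff)
  then have "m * n = 0"
    by (rule int_square_form_45_12_trivial)
  with \<open>m > 0\<close> \<open>n > 0\<close> show False
    by simp
qed

lemma design2_replication:
  assumes "design2 X I B v k lam" and "p \<in> X"
  shows "card {i\<in>I. p \<in> B i} * (k - 1) = (v - 1) * lam"
proof -
  let ?Ip = "{i\<in>I. p \<in> B i}"
  have "finite X" "card X = v" "finite I" and blocks: "\<And>i. i \<in> I \<Longrightarrow> B i \<subseteq> X \<and> card (B i) = k"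
    and pairs: "\<And>q. q \<in> X \<Longrightarrow> q \<noteq> p \<Longrightarrow> card {i\<in>I. {p, q} \<subseteq> B i} = lam"
    using assms by (auto simp: design2_def)
  have "\<forall>i\<in>?Ip. card {q\<in>X - {p}. q \<in> B i} = k - 1"
  proof
    fix i assume "i \<in> ?Ip"
    then have "{q\<in>X - {p}. q \<in> B i} = B i - {p}" "p \<in> B i" "card (B i) = k"
      using blocks by auto
    then show "card {q\<in>X - {p}. q \<in> B i} = k - 1"
      by simp
  qed
  then have "(\<Sum>q\<in>X - {p}. card {i\<in>?Ip. q \<in> B i}) = (k - 1) * card ?Ip"
    using \<open>finite X\<close> \<open>finite I\<close> by (intro sum_multicount) auto
  moreover have "(\<Sum>q\<in>X - {p}. card {i\<in>?Ip. q \<in> B i}) = (\<Sum>q\<in>X - {p}. lam)"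
  proof (rule sum.cong)
    fix q assume "q \<in> X - {p}"
    moreover have "{i\<in>?Ip. q \<in> B i} = {i\<in>I. {p, q} \<subseteq> B i}"
      by auto
    ultimately show "card {i\<in>?Ip. q \<in> B i} = lam"
      using pairs by simp
  qed simp
  ultimately show ?thesis
    using \<open>finite X\<close> \<open>card X = v\<close> \<open>p \<in> X\<close> by (simp add: mult.commute)
qed

lemma design2_incidence_gram:
  assumes "design2 X I B v k lam" and g: "bij_betw g {..<v} X" and h: "bij_betw h {..<n} I"
    and "p < v" "q < v"
  shows "(\<Sum>j<n. of_bool (g p \<in> B (h j)) * of_bool (g q \<in> B (h j)))
           = (of_nat (if p = q then card {i\<in>I. g p \<in> B i} else lam) :: 'a::semiring_1)"
proof -
  have "finite I" and pairs: "\<And>x y. x \<in> X \<Longrightarrow> y \<in> X \<Longrightarrow> x \<noteq> y \<Longrightarrow> card {i\<in>I. {x, y} \<subseteq> B i} = lam"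
    using assms(1) by (auto simp: design2_def)
  have "(\<Sum>j<n. of_bool (g p \<in> B (h j)) * of_bool (g q \<in> B (h j)))
          = (\<Sum>i\<in>I. of_bool (g p \<in> B i \<and> g q \<in> B i) :: 'a)"
    by (simp add: sum.reindex_bij_betw[OF h, symmetric] of_bool_conj)
  also have "\<dots> = of_nat (card {i\<in>I. g p \<in> B i \<and> g q \<in> B i})"
    using \<open>finite I\<close> by (simp add: Int_def)
  finally have sum_eq: "(\<Sum>j<n. of_bool (g p \<in> B (h j)) * of_bool (g q \<in> B (h j)))
      = (of_nat (card {i\<in>I. g p \<in> B i \<and> g q \<in> B i}) :: 'a)" .
  show ?thesis
  proof (cases "p = q")
    case False
    then have "g p \<noteq> g q" "g p \<in> X" "g q \<in> X"
      using g \<open>p < v\<close> \<open>q < v\<close> by (auto simp: bij_betw_def inj_on_def)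
    with False show ?thesis
      using pairs[of "g p" "g q"] sum_eq by simp
  qed (use sum_eq in simp)
qed

theorem theorem2:
  fixes X :: "'a set" and I :: "'i set" and B :: "'i \<Rightarrow> 'a set"
  shows "\<not> quasi3_design X I B 267 57 12 0 3"
proof
  assume "quasi3_design X I B 267 57 12 0 3"
  then have design: "design2 X I B 267 57 12" and "card I = 267"
    by (simp_all add: quasi3_design_def symmetric_design2_def)
  then have "finite X" "card X = 267" "finite I"
    by (simp_all add: design2_def)
  obtain g where g: "bij_betw g {..<267::nat} X"
    using ex_bij_betw_nat_finite[OF \<open>finite X\<close>] \<open>card X = 267\<close> by (auto simp: atLeast0LessThan)
  obtain h where h: "bij_betw h {..<267::nat} I"
    using ex_bij_betw_nat_finite[OF \<open>finite I\<close>] \<open>card I = 267\<close> by (auto simp: atLeast0LessThan)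
  have replication: "card {i\<in>I. x \<in> B i} = 57" if "x \<in> X" for x
    using design2_replication[OF design that] by simp
  define a where "a p j = (of_bool (g p \<in> B (h j)) :: rat)" for p j
  have gram: "(\<Sum>j<267. a p j * a q j) = (if p = q then 57 else 12)" if "p < 267" "q < 267" for p q
  proof -
    have "(\<Sum>j<267. a p j * a q j) = of_nat (if p = q then card {i\<in>I. g p \<in> B i} else 12)"
      unfolding a_def by (rule design2_incidence_gram[OF design g h that])
    then show ?thesis
      using replication bij_betw_apply[OF g] that by auto
  qed
  have "\<exists>x y :: rat. 45 * x\<^sup>2 = 1 + 12 * y\<^sup>2"
    using odd_square_design_condition[OF gram, of 6 3] by simp
  then show False
    using rat_square_form_45_12_unsolvable by blast
qed

end
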